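(* Let $n\ge 2$, let $m$ and $k_1,\ldots,k_n$ be positive integers with $m+2\le\min\{k_1,\ldots,k_n\}$. For $i=1,\ldots,n$ let $G_i$ be an inflator graph of order $k_i$ with drop $m$, and let $M_i$ be an HCTV graph with $|V(M_i)|\ge m$. Let $F$ be the graph obtained from the cycle $C_n$ by inflating each vertex $v_i$ with $G_i$ and then inserting $M_i$ into each former edge $e_i$ of $C_n$. Then $F$ is a connected, nontraceable detour graph.
   Context: All graphs are finite and simple; the order of a path is its number of vertices. For a vertex $v$, $\tau(v)$ is the order of a longest path starting at $v$; a detour graph is one in which all vertices have the same $\tau(v)$; nontraceable means no hamiltonian path. $\tau_G(u,v)$ is the order of a longest $u$–$v$ path in $G$. Inflator graph with drop $m$: a graph $G$ of order $k\ge 3$ ($m\le k-2$) with two distinguished vertices $a,b$ such that (D-1) $\tau_G(a,b)=k-m$; (D-2) each distinguished vertex is an endvertex of a path containing all vertices except the other distinguished vertex; (D-3) $G$ has a hamiltonian path starting at each distinguished vertex; (D-4) for every $v\notin\{a,b\}$ there are disjoint paths $P$ from $v$ to one distinguished vertex and $Q$ with the other distinguished vertex as an endvertex ($Q$ possibly a single vertex) with $V(P)\cup V(Q)=V(G)$. HCTV graph: either $K_1$, or a graph with two vertices $x,y$ (anchors) such that every vertex is an endvertex of a hamiltonian path whose other endvertex is $x$ or $y$. Construction: $C_n$ has vertices $v_1,\ldots,v_n$ and edges $e_i=v_iv_{i+1}$ (indices mod $n$; for $n=2$, $C_2$ has two parallel edges between $v_1,v_2$). Inflating $v_i$ with $G_i$: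 delete $v_i$, add a copy of $G_i$, and join the two former neighbours (edge-ends) of $v_i$ to the two distinguished vertices of $G_i$ by a matching, using the two edges formerly incident with $v_i$. Inserting $M_i$ into an edge $e$: delete $e$ and join its two endvertices to the two anchors of $M_i$ by a matching if $M_i\ne K_1$, or both to the single vertex of $M_i$ if $M_i=K_1$. *)

theory Defs
  imports Main
begin

definition graph :: "'a set \<Rightarrow> 'a set set \<Rightarrow> bool" where
  "graph V E \<longleftrightarrow> finite V \<and> (\<forall>e\<in>E. e \<subseteq> V \<and> card e = 2)"

definition is_path :: "'a set \<Rightarrow> 'a set set \<Rightarrow> 'a list \<Rightarrow> bool" where
  "is_path V E p \<longleftrightarrow> p \<noteq> [] \<and> distinct p \<and> set p \<subseteq> V \<and>
     (\<forall>i. Suc i < length p \<longrightarrow> {p ! i, p ! Suc i} \<in> E)"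

definition tau :: "'a set \<Rightarrow> 'a set set \<Rightarrow> 'a \<Rightarrow> nat" where
  "tau V E v = Max {length p | p. is_path V E p \<and> hd p = v}"

definition detour_graph :: "'a set \<Rightarrow> 'a set set \<Rightarrow> bool" where
  "detour_graph V E \<longleftrightarrow> (\<forall>u\<in>V. \<forall>v\<in>V. tau V E u = tau V E v)"

definition traceable :: "'a set \<Rightarrow> 'a set set \<Rightarrow> bool" where
  "traceable V E \<longleftrightarrow> (\<exists>p. is_path V E p \<and> set p = V)"

definition connected_graph :: "'a set \<Rightarrow> 'a set set \<Rightarrow> bool" where
  "connected_graph V E \<longleftrightarrow> (\<forall>u\<in>V. \<forall>v\<in>V. \<exists>p. is_path V E p \<and> hd p = u \<and> last p = v)"

text \<open>Inflator graph of order k with drop m and distinguished vertices a, b.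
  (D-1) is written out: tau_G(a,b) = k - m, i.e. a longest a-b path has order k - m.\<close>
definition inflator :: "'a set \<Rightarrow> 'a set set \<Rightarrow> nat \<Rightarrow> nat \<Rightarrow> 'a \<Rightarrow> 'a \<Rightarrow> bool" where
  "inflator V E k m a b \<longleftrightarrow>
     graph V E \<and> card V = k \<and> k \<ge> 3 \<and> m \<le> k - 2 \<and>
     a \<in> V \<and> b \<in> V \<and> a \<noteq> b \<and>
     \<comment> \<open>(D-1)\<close>
     (\<exists>p. is_path V E p \<and> hd p = a \<and> last p = b \<and> length p = k - m) \<and>
     (\<forall>p. is_path V E p \<and> hd p = a \<and> last p = b \<longrightarrow> length p \<le> k - m) \<and>
     \<comment> \<open>(D-2)\<close>
     (\<exists>p. is_path V E p \<and> hd p = a \<and> set p = V - {b}) \<and>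
     (\<exists>p. is_path V E p \<and> hd p = b \<and> set p = V - {a}) \<and>
     \<comment> \<open>(D-3)\<close>
     (\<exists>p. is_path V E p \<and> hd p = a \<and> set p = V) \<and>
     (\<exists>p. is_path V E p \<and> hd p = b \<and> set p = V) \<and>
     \<comment> \<open>(D-4)\<close>
     (\<forall>v \<in> V - {a, b}. \<exists>P Q.
        is_path V E P \<and> is_path V E Q \<and> set P \<inter> set Q = {} \<and> set P \<union> set Q = V \<and>
        hd P = v \<and>
        ((last P = a \<and> hd Q = b) \<or> (last P = b \<and> hd Q = a)))"

definition hctv :: "'a set \<Rightarrow> 'a set set \<Rightarrow> 'a \<Rightarrow> 'a \<Rightarrow> bool" where
  "hctv V E x y \<longleftrightarrow> graph V E \<and>
     ((V = {x} \<and> y = x) \<or>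
      (x \<in> V \<and> y \<in> V \<and> x \<noteq> y \<and>
       (\<forall>v\<in>V. \<exists>p. is_path V E p \<and> set p = V \<and> hd p = v \<and> (last p = x \<or> last p = y))))"

text \<open>Cycle vertices v_0..v_{n-1}, edge e_i = v_i v_{(i+1) mod n}.
  Vertex v_i is replaced by a copy of G_i (tagged Inl (i,_)); edge e_i by a copy of M_i
  (tagged Inr (i,_)). Distinguished vertex b_i of G_i is joined to anchor x_i of M_i and
  anchor y_i of M_i to distinguished vertex a_{(i+1) mod n} of G_{(i+1) mod n}.
  If M_i = K_1 (x_i = y_i) both are joined to its single vertex.\<close>
definition cyc_V :: "nat \<Rightarrow> (nat \<Rightarrow> 'a set) \<Rightarrow> (nat \<Rightarrow> 'b set) \<Rightarrow> ((nat \<times> 'a) + (nat \<times> 'b)) set" where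
  "cyc_V n VG VM = {Inl (i, v) | i v. i < n \<and> v \<in> VG i} \<union> {Inr (i, v) | i v. i < n \<and> v \<in> VM i}"

definition cyc_E :: "nat \<Rightarrow> (nat \<Rightarrow> 'a set set) \<Rightarrow> (nat \<Rightarrow> 'b set set) \<Rightarrow>
    (nat \<Rightarrow> 'a) \<Rightarrow> (nat \<Rightarrow> 'a) \<Rightarrow> (nat \<Rightarrow> 'b) \<Rightarrow> (nat \<Rightarrow> 'b) \<Rightarrow>
    ((nat \<times> 'a) + (nat \<times> 'b)) set set" where
  "cyc_E n EG EM a b x y =
     {{Inl (i, u), Inl (i, w)} | i u w. i < n \<and> {u, w} \<in> EG i} \<union>
     {{Inr (i, u), Inr (i, w)} | i u w. i < n \<and> {u, w} \<in> EM i} \<union>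
     {{Inl (i, b i), Inr (i, x i)} | i. i < n} \<union>
     {{Inr (i, y i), Inl (Suc i mod n, a (Suc i mod n))} | i. i < n}"

end

theory Submission
  imports Defs
begin

text \<open>
  For a path \<open>p\<close> and a copy \<open>W\<close> of some \<open>G\<^sub>i\<close> or \<open>M\<^sub>i\<close> in \<open>F\<close>, let \<open>c\<close> be the
  number of edges of \<open>p\<close> leaving \<open>W\<close> and \<open>e\<close> the number of ends of \<open>p\<close> in \<open>W\<close>. Then
  \<open>c + e\<close> is even and \<open>c \<le> 2\<close>, since \<open>W\<close> is attached to the rest of \<open>F\<close> by two edges.
  A path passing through a copy of \<open>G\<^sub>i\<close> (\<open>c = 2\<close>, \<open>e = 0\<close>) runs inside it between
  \<open>a\<^sub>i\<close> and \<open>b\<^sub>i\<close>, so by (D-1) it misses at least \<open>m\<close> of its vertices; a path avoiding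
  a copy of \<open>M\<^sub>i\<close> (\<open>c = e = 0\<close>) misses \<open>|M\<^sub>i| \<ge> m\<close> vertices. Every boundary edge joins
  a copy of some \<open>G\<^sub>j\<close> to a copy of some \<open>M\<^sub>l\<close>, so summing \<open>m (c - e)\<close> over the
  \<open>G\<close>-copies and \<open>m (2 - c - e)\<close> over the \<open>M\<close>-copies gives \<open>m (2n - 2)\<close>, and hence
  every path has order at most \<open>|F| - (n - 1) m\<close>.

  Conversely, every vertex starts a path of exactly this order: it covers the copies of
  \<open>G\<^sub>i\<close> and \<open>M\<^sub>i\<close> containing the vertex (using (D-2)--(D-4) or the HCTV property), and goes
  once around the cycle through every other \<open>G\<^sub>j\<close> along an \<open>a\<^sub>j\<close>--\<open>b\<^sub>j\<close> path of order
  \<open>k\<^sub>j - m\<close> and through every other \<open>M\<^sub>j\<close> along a hamiltonian \<open>x\<^sub>j\<close>--\<open>y\<^sub>j\<close> path.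
\<close>

lemma is_path_iff:
  "is_path V E p \<longleftrightarrow> p \<noteq> [] \<and> distinct p \<and> set p \<subseteq> V \<and> successively (\<lambda>u v. {u, v} \<in> E) p"
  by (auto simp: is_path_def successively_conv_nth)

lemma is_path_singleton [simp]: "is_path V E [v] \<longleftrightarrow> v \<in> V"
  by (simp add: is_path_iff)

lemma is_path_append:
  assumes "is_path V E p" "is_path V E q" "set p \<inter> set q = {}" "{last p, hd q} \<in> E"
  shows "is_path V E (p @ q)"
  using assms by (auto simp: is_path_iff successively_append_iff)

lemma is_path_appendD:
  assumes "is_path V E (xs @ ys)" "xs \<noteq> []" "ys \<noteq> []"
  shows "{last xs, hd ys} \<in> E" "set xs \<inter> set ys = {}"
  using assms by (auto simp: is_path_iff successively_append_iff)

lemma is_path_infix: "is_path V E (xs @ q @ ys) \<Longrightarrow> q \<noteq> [] \<Longrightarrow> is_path V E q"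
  by (auto simp: is_path_iff successively_append_iff)

lemma is_path_rev [simp]: "is_path V E (rev p) \<longleftrightarrow> is_path V E p"
proof -
  have "successively (\<lambda>u v. {v, u} \<in> E) p \<longleftrightarrow> successively (\<lambda>u v. {u, v} \<in> E) p"
    by (simp add: insert_commute)
  then show ?thesis by (simp add: is_path_iff)
qed

lemma is_path_map:
  assumes "is_path V E p" "inj_on f (set p)" "f ` set p \<subseteq> V'"
    and "\<And>u v. u \<in> set p \<Longrightarrow> v \<in> set p \<Longrightarrow> {u, v} \<in> E \<Longrightarrow> {f u, f v} \<in> E'"
  shows "is_path V' E' (map f p)"
proof -
  have "successively (\<lambda>u v. {f u, f v} \<in> E') p"
    using assms(1,4) unfolding is_path_iff by (blast intro: successively_mono)
  then show ?thesis using assms(1-3) by (simp add: is_path_iff distinct_map successively_map)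
qed

lemma card_set_path: "is_path V E p \<Longrightarrow> card (set p) = length p"
  by (simp add: is_path_def distinct_card)

lemma tau_eqI:
  assumes "\<And>p. is_path V E p \<Longrightarrow> hd p = v \<Longrightarrow> length p \<le> L"
    and "is_path V E p" "hd p = v" "length p = L"
  shows "tau V E v = L"
  unfolding tau_def
proof (rule Max_eqI)
  have "{length p |p. is_path V E p \<and> hd p = v} \<subseteq> {..L}"
    using assms(1) by auto
  then show "finite {length p |p. is_path V E p \<and> hd p = v}"
    by (rule finite_subset) simp
  show "l \<le> L" if "l \<in> {length p |p. is_path V E p \<and> hd p = v}" for l
    using that assms(1) by auto
  show "L \<in> {length p |p. is_path V E p \<and> hd p = v}"
    using assms(2-4) by auto
qed

definition adjacent :: "'a set \<Rightarrow> 'a set set \<Rightarrow> 'a \<Rightarrow> 'a \<Rightarrow> bool" where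
  "adjacent V E u v \<longleftrightarrow> {u, v} \<in> E \<and> u \<in> V \<and> v \<in> V"

lemma adjacent_sym: "adjacent V E u v \<Longrightarrow> adjacent V E v u"
  by (simp add: adjacent_def insert_commute)

lemma path_if_rtranclp_adjacent:
  assumes "(adjacent V E)\<^sup>*\<^sup>* u v" "u \<in> V"
  shows "\<exists>p. is_path V E p \<and> hd p = u \<and> last p = v"
  using assms(1)
proof (induction rule: rtranclp_induct)
  case base
  then show ?case using assms(2) by (intro exI[of _ "[u]"]) simp
next
  case (step v w)
  then obtain p where p: "is_path V E p" "hd p = u" "last p = v" by blast
  show ?case
  proof (cases "w \<in> set p")
    case True
    then obtain i where i: "i < length p" "p ! i = w" by (auto simp: in_set_conv_nth)
    then have "is_path V E (take (Suc i) p)"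
      using p(1) is_path_infix[of V E "[]" "take (Suc i) p" "drop (Suc i) p"] by (cases p) auto
    moreover have "hd (take (Suc i) p) = u" using p(2) by (cases p) auto
    moreover have "last (take (Suc i) p) = w" using i by (simp add: take_Suc_conv_app_nth)
    ultimately show ?thesis by blast
  next
    case False
    have "is_path V E (p @ [w])" using p step(2) False by (intro is_path_append) (auto simp: adjacent_def)
    moreover have "hd (p @ [w]) = u" using p by (simp add: is_path_iff)
    ultimately show ?thesis by (intro exI[of _ "p @ [w]"]) simp
  qed
qed

lemma rtranclp_adjacent_if_in_path:
  assumes "is_path V E p" "w \<in> set p"
  shows "(adjacent V E)\<^sup>*\<^sup>* (hd p) w"
proof -
  have "(adjacent V E)\<^sup>*\<^sup>* (hd p) (p ! i)" if "i < length p" for i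
    using that
  proof (induction i)
    case 0
    then show ?case by (simp add: hd_conv_nth)
  next
    case (Suc i)
    have "adjacent V E (p ! i) (p ! Suc i)"
      using assms(1) Suc.prems unfolding is_path_def adjacent_def by (simp add: subset_iff)
    with Suc show ?case by (meson Suc_lessD rtranclp.rtrancl_into_rtrancl)
  qed
  moreover obtain i where "i < length p" "w = p ! i" using assms(2) by (metis in_set_conv_nth)
  ultimately show ?thesis by simp
qed

lemma connected_graphI:
  assumes "\<And>v. v \<in> V \<Longrightarrow> (adjacent V E)\<^sup>*\<^sup>* r v"
  shows "connected_graph V E"
  unfolding connected_graph_def
proof (intro ballI)
  fix u v assume "u \<in> V" "v \<in> V"
  have "symp (adjacent V E)\<^sup>*\<^sup>*"
    by (rule symp_rtranclp, rule sympI, erule adjacent_sym)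
  then have "(adjacent V E)\<^sup>*\<^sup>* u r" using assms[OF \<open>u \<in> V\<close>] by (rule sympD)
  then have "(adjacent V E)\<^sup>*\<^sup>* u v" using assms[OF \<open>v \<in> V\<close>] by (rule rtranclp_trans)
  then show "\<exists>p. is_path V E p \<and> hd p = u \<and> last p = v"
    using \<open>u \<in> V\<close> by (rule path_if_rtranclp_adjacent)
qed

section \<open>Crossing the boundary of a vertex set\<close>

definition crossings :: "'a set \<Rightarrow> 'a list \<Rightarrow> nat set" where
  "crossings W p = {t. Suc t < length p \<and> (p ! t \<in> W) \<noteq> (p ! Suc t \<in> W)}"

text \<open>A path with a single vertex in \<open>W\<close> has both of its ends there.\<close>

definition end_count :: "'a set \<Rightarrow> 'a list \<Rightarrow> nat" where
  "end_count W p = of_bool (hd p \<in> W) + of_bool (last p \<in> W)"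

lemma finite_crossings [simp]: "finite (crossings W p)"
  by (rule finite_subset[of _ "{..<length p}"]) (auto simp: crossings_def)

lemma crossings_Cons:
  assumes "p \<noteq> []"
  shows "crossings W (v # p) =
    (if (v \<in> W) = (hd p \<in> W) then Suc ` crossings W p else insert 0 (Suc ` crossings W p))"
proof (rule set_eqI)
  fix t
  show "t \<in> crossings W (v # p) \<longleftrightarrow>
    t \<in> (if (v \<in> W) = (hd p \<in> W) then Suc ` crossings W p else insert 0 (Suc ` crossings W p))"
    using assms by (cases t) (auto simp: crossings_def hd_conv_nth)
qed

lemma even_card_crossings_plus_end_count:
  "p \<noteq> [] \<Longrightarrow> even (card (crossings W p) + end_count W p)"
proof (induction p rule: list_nonempty_induct)
  case (single v)
  then show ?case by (simp add: crossings_def end_count_def)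
next
  case (cons v p)
  have "card (crossings W (v # p)) = card (crossings W p) + of_bool ((v \<in> W) \<noteq> (hd p \<in> W))"
    using cons.hyps by (simp add: crossings_Cons card_image image_iff)
  then show ?case using cons.IH cons.hyps by (auto simp: end_count_def)
qed

lemma same_side_if_no_crossings_between:
  assumes "\<And>t. i \<le> t \<Longrightarrow> t < j \<Longrightarrow> t \<notin> crossings W p" "i \<le> j" "j < length p"
  shows "p ! i \<in> W \<longleftrightarrow> p ! j \<in> W"
  using assms
proof (induction j)
  case (Suc j)
  then show ?case by (cases "i = Suc j") (auto simp: crossings_def)
qed simp

lemma disjoint_if_no_crossings:
  assumes "crossings W p = {}" "hd p \<notin> W"
  shows "set p \<inter> W = {}"
proof -
  have "p ! t \<notin> W" if "t < length p" for t
    using same_side_if_no_crossings_between[of 0 t W p] assms that by (cases p) auto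
  then show ?thesis by (auto simp: in_set_conv_nth)
qed

lemma split_crossing_twice:
  assumes two: "card (crossings W p) = 2" and start: "hd p \<notin> W"
  obtains xs q ys where "p = xs @ q @ ys" "xs \<noteq> []" "q \<noteq> []" "ys \<noteq> []"
    "set xs \<inter> W = {}" "set q \<subseteq> W" "set ys \<inter> W = {}"
proof -
  obtain s0 t0 where "crossings W p = {s0, t0}" "s0 \<noteq> t0"
    using two by (auto simp: card_2_iff)
  then obtain s t where st: "crossings W p = {s, t}" "s < t"
    by (metis insert_commute linorder_neqE_nat)
  have t: "Suc t < length p" using st by (auto simp: crossings_def)
  have same_side: "p ! i \<in> W \<longleftrightarrow> p ! j \<in> W"
    if "i \<le> j" "j < length p" "\<And>r. i \<le> r \<Longrightarrow> r < j \<Longrightarrow> r \<noteq> s \<and> r \<noteq> t" for i j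
    by (rule same_side_if_no_crossings_between) (use st(1) that in auto)
  have before: "p ! i \<notin> W" if "i \<le> s" for i
    using same_side[of 0 i] start that st t by (cases p) auto
  have inside: "p ! i \<in> W" if "s < i" "i \<le> t" for i
  proof -
    have "p ! Suc s \<in> W" using before[of s] st(1) by (auto simp: crossings_def)
    then show ?thesis using same_side[of "Suc s" i] that st t by auto
  qed
  have after: "p ! i \<notin> W" if "t < i" "i < length p" for i
  proof -
    have "p ! Suc t \<notin> W" using inside[of t] st(1) st(2) by (auto simp: crossings_def)
    then show ?thesis using same_side[of "Suc t" i] that st by auto
  qed
  let ?xs = "take (Suc s) p" and ?q = "take (t - s) (drop (Suc s) p)" and ?ys = "drop (Suc t) p"
  have "?xs @ ?q = take (Suc t) p"
    using st(2) take_add[of "Suc s" "t - s" p] by simp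
  then have "p = ?xs @ ?q @ ?ys" by (metis append.assoc append_take_drop_id)
  moreover have "?xs \<noteq> []" "?q \<noteq> []" "?ys \<noteq> []" using st(2) t by auto
  moreover have "set ?xs \<inter> W = {}" using before by (auto simp: in_set_conv_nth)
  moreover have "set ?q \<subseteq> W" using inside t by (auto simp: in_set_conv_nth)
  moreover have "set ?ys \<inter> W = {}" using after by (auto simp: in_set_conv_nth)
  ultimately show ?thesis by (rule that)
qed

lemma path_crossing_twice:
  assumes p: "is_path V E p" and "card (crossings W p) = 2" "hd p \<notin> W"
  obtains q u v where "is_path V E q" "set q = set p \<inter> W" "u \<notin> W" "v \<notin> W" "u \<noteq> v"
    "{u, hd q} \<in> E" "{last q, v} \<in> E"
proof -
  obtain xs q ys where split: "p = xs @ q @ ys" "xs \<noteq> []" "q \<noteq> []" "ys \<noteq> []"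
    and sides: "set xs \<inter> W = {}" "set q \<subseteq> W" "set ys \<inter> W = {}"
    using assms(2,3) by (rule split_crossing_twice)
  have "is_path V E (xs @ q @ ys)" using p split(1) by simp
  then have path: "is_path V E q" and edges: "{last xs, hd q} \<in> E" "{last q, hd ys} \<in> E"
    and disj: "set xs \<inter> set ys = {}"
    using is_path_appendD[of V E xs "q @ ys"] is_path_appendD[of V E "xs @ q" ys]
      is_path_infix[of V E xs q ys] split(2-4) by auto
  have mem: "last xs \<in> set xs" "hd ys \<in> set ys" using split(2,4) by auto
  show ?thesis
  proof (rule that[OF path _ _ _ _ edges])
    show "set q = set p \<inter> W" using split(1) sides by auto
    show "last xs \<notin> W" "hd ys \<notin> W" using mem sides(1,3) by auto
    show "last xs \<noteq> hd ys" using mem disj by auto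
  qed
qed

lemma card_crossings_le:
  assumes p: "is_path V E p" and "finite B"
    and boundary: "\<And>u v. {u, v} \<in> E \<Longrightarrow> u \<in> W \<Longrightarrow> v \<notin> W \<Longrightarrow> {u, v} \<in> B"
  shows "card (crossings W p) \<le> card B"
proof (rule card_inj_on_le)
  let ?edge = "\<lambda>t. {p ! t, p ! Suc t}"
  have dist: "distinct p" and edges: "\<And>t. Suc t < length p \<Longrightarrow> ?edge t \<in> E"
    using p by (auto simp: is_path_def)
  show "inj_on ?edge (crossings W p)"
  proof (rule inj_onI)
    fix s t assume "s \<in> crossings W p" "t \<in> crossings W p" "?edge s = ?edge t"
    then show "s = t" using dist
      by (auto simp: crossings_def doubleton_eq_iff nth_eq_iff_index_eq)
  qed
  show "?edge ` crossings W p \<subseteq> B"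
  proof
    fix e assume "e \<in> ?edge ` crossings W p"
    then obtain t where t: "Suc t < length p" "(p ! t \<in> W) \<noteq> (p ! Suc t \<in> W)" "e = ?edge t"
      by (auto simp: crossings_def)
    then show "e \<in> B"
      using boundary[of "p ! t" "p ! Suc t"] boundary[of "p ! Suc t" "p ! t"] edges[OF t(1)]
      by (auto simp: insert_commute)
  qed
qed fact

lemma crossings_Diff: "set p \<subseteq> V \<Longrightarrow> crossings (V - W) p = crossings W p"
  by (auto simp: crossings_def subset_iff)

lemma end_count_Diff: "p \<noteq> [] \<Longrightarrow> set p \<subseteq> V \<Longrightarrow> end_count W p + end_count (V - W) p = 2"
  by (auto simp: end_count_def)

lemma sum_card_crossings_UN:
  assumes "finite J" "\<forall>i\<in>J. \<forall>j\<in>J. i \<noteq> j \<longrightarrow> W i \<inter> W j = {}" "is_path V E p"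
    and no_edge: "\<And>i j u v. i \<in> J \<Longrightarrow> j \<in> J \<Longrightarrow> i \<noteq> j \<Longrightarrow> u \<in> W i \<Longrightarrow> v \<in> W j \<Longrightarrow> {u, v} \<notin> E"
  shows "(\<Sum>j\<in>J. card (crossings (W j) p)) = card (crossings (\<Union>j\<in>J. W j) p)"
proof -
  have edges: "{p ! t, p ! Suc t} \<in> E" if "Suc t < length p" for t
    using assms(3) that by (simp add: is_path_def)
  have same_block: "i = j" if "Suc t < length p" "i \<in> J" "j \<in> J"
    "p ! t \<in> W i \<and> p ! Suc t \<in> W j \<or> p ! Suc t \<in> W i \<and> p ! t \<in> W j" for i j t
    using that no_edge[of i j] no_edge[of j i] edges[OF that(1)] by (auto simp: insert_commute)
  have cross_iff: "t \<in> crossings (W j) p \<longleftrightarrow> t \<in> crossings (\<Union>j\<in>J. W j) p \<and>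
      (p ! t \<in> W j \<or> p ! Suc t \<in> W j)" if "j \<in> J" for j t
    using that same_block[of t j] by (auto simp: crossings_def)
  have "crossings (\<Union>j\<in>J. W j) p = (\<Union>j\<in>J. crossings (W j) p)"
    using cross_iff by (auto simp: crossings_def)
  moreover have "card (\<Union>j\<in>J. crossings (W j) p) = (\<Sum>j\<in>J. card (crossings (W j) p))"
  proof (rule card_UN_disjoint[OF assms(1)])
    show "\<forall>i\<in>J. \<forall>j\<in>J. i \<noteq> j \<longrightarrow> crossings (W i) p \<inter> crossings (W j) p = {}"
    proof (intro ballI impI equals0I)
      fix i j t assume ij: "i \<in> J" "j \<in> J" "i \<noteq> j" and t: "t \<in> crossings (W i) p \<inter> crossings (W j) p"
      then have "t \<in> crossings (\<Union>j\<in>J. W j) p" "p ! t \<in> W i \<or> p ! Suc t \<in> W i"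
        "p ! t \<in> W j \<or> p ! Suc t \<in> W j"
        using cross_iff by blast+
      then have "p ! t \<in> W i \<inter> W j \<or> p ! Suc t \<in> W i \<inter> W j"
        using ij(1,2) unfolding crossings_def by blast
      then show False using assms(2) ij by blast
    qed
  qed simp
  ultimately show ?thesis by simp
qed

lemma sum_of_bool_mem_disjoint_family:
  assumes "finite J" "\<forall>i\<in>J. \<forall>j\<in>J. i \<noteq> j \<longrightarrow> W i \<inter> W j = {}"
  shows "(\<Sum>j\<in>J. of_bool (v \<in> W j)) = (of_bool (v \<in> (\<Union>j\<in>J. W j)) :: nat)"
proof (cases "v \<in> (\<Union>j\<in>J. W j)")
  case True
  then obtain i where i: "i \<in> J" "v \<in> W i" by blast
  have "(\<Sum>j\<in>J. of_bool (v \<in> W j)) = (\<Sum>j\<in>J. of_bool (j = i) :: nat)"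
    using assms(2) i by (intro sum.cong) auto
  then show ?thesis using True i assms(1) by simp
qed auto

lemma sum_end_count_UN:
  assumes "finite J" "\<forall>i\<in>J. \<forall>j\<in>J. i \<noteq> j \<longrightarrow> W i \<inter> W j = {}"
  shows "(\<Sum>j\<in>J. end_count (W j) p) = end_count (\<Union>j\<in>J. W j) p"
  using sum_of_bool_mem_disjoint_family[of J W, OF assms]
  by (simp add: end_count_def sum.distrib)

lemma inflator_ab_path:
  assumes "inflator V E k m a b"
  obtains p where "is_path V E p" "hd p = a" "last p = b" "length p = k - m"
  using assms unfolding inflator_def by blast

lemma inflator_length_path_between:
  assumes "inflator V E k m a b" "is_path V E p" "{hd p, last p} = {a, b}"
  shows "length p \<le> k - m"
proof (cases "hd p = a")
  case True
  then have "last p = b" using assms(1,3) by (auto simp: inflator_def doubleton_eq_iff)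
  then show ?thesis using True assms(1,2) unfolding inflator_def by blast
next
  case False
  then have "hd (rev p) = a" "last (rev p) = b"
    using assms(2,3) by (auto simp: doubleton_eq_iff hd_rev last_rev is_path_def)
  then show ?thesis using assms(1,2) unfolding inflator_def by (metis is_path_rev length_rev)
qed

lemma inflator_hamiltonian_path:
  assumes "inflator V E k m a b" "v \<in> {a, b}"
  obtains p where "is_path V E p" "hd p = v" "set p = V"
  using assms unfolding inflator_def by blast

text \<open>(D-4), extended to the distinguished vertices by means of (D-2).\<close>
lemma inflator_split:
  assumes infl: "inflator V E k m a b" and "v \<in> V"
  obtains P Q where "is_path V E P" "is_path V E Q" "set P \<inter> set Q = {}" "set P \<union> set Q = V"
    "hd P = v" "last P = a \<and> hd Q = b \<or> last P = b \<and> hd Q = a"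
proof -
  have ab: "a \<in> V" "b \<in> V" "a \<noteq> b" using infl by (auto simp: inflator_def)
  consider "v = a" | "v = b" | "v \<in> V - {a, b}" using \<open>v \<in> V\<close> by blast
  then show ?thesis
  proof cases
    case 1
    obtain Q where "is_path V E Q" "hd Q = b" "set Q = V - {a}"
      using infl unfolding inflator_def by blast
    then show ?thesis using that[of "[a]" Q] 1 ab by auto
  next
    case 2
    obtain Q where "is_path V E Q" "hd Q = a" "set Q = V - {b}"
      using infl unfolding inflator_def by blast
    then show ?thesis using that[of "[b]" Q] 2 ab by auto
  next
    case 3
    then show ?thesis using infl that unfolding inflator_def by blast
  qed
qed

lemma hctv_hamiltonian_path:
  assumes "hctv V E x y" "v \<in> V"
  obtains q where "is_path V E q" "set q = V" "hd q = v" "last q = x \<or> last q = y"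
proof -
  consider "V = {x}" "y = x" | "\<forall>v\<in>V. \<exists>q. is_path V E q \<and> set q = V \<and> hd q = v \<and> (last q = x \<or> last q = y)"
    using assms(1) unfolding hctv_def by blast
  then show ?thesis
  proof cases
    case 1
    then show ?thesis using that[of "[x]"] assms(2) by simp
  qed (use assms(2) that in blast)
qed

lemma hctv_hamiltonian_path_x_y:
  assumes "hctv V E x y"
  obtains q where "is_path V E q" "set q = V" "hd q = x" "last q = y"
proof -
  have "x \<in> V" using assms unfolding hctv_def by blast
  then obtain q where q: "is_path V E q" "set q = V" "hd q = x" "last q = x \<or> last q = y"
    using assms hctv_hamiltonian_path by metis
  have "last q = y"
  proof (cases "x = y")
    case False
    then have "y \<in> V" using assms unfolding hctv_def by blast
    show ?thesis
    proof (rule ccontr)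
      assume "last q \<noteq> y"
      then have "hd q = last q" using q by simp
      with q(1,3) have "set q = {x}"
        by (cases q rule: rev_cases) (auto simp: is_path_def hd_append split: if_splits dest: hd_in_set)
      then show False using \<open>y \<in> V\<close> False q(2) by auto
    qed
  qed (use q in auto)
  then show ?thesis using q that by blast
qed

lemma add_mod_cancel_left:
  fixes n :: nat
  assumes "(s + t) mod n = (s + t') mod n" "t < n" "t' < n"
  shows "t = t'"
proof -
  have "t mod n = t' mod n" using assms(1) by (simp add: nat_mod_eq_iff)
  then show ?thesis using assms(2,3) by simp
qed

lemma sum_mod_rotate:
  fixes n :: nat
  shows "(\<Sum>t<n. f ((s + t) mod n)) = (\<Sum>i<n. f i)"
proof (cases "n = 0")
  case False
  have "inj_on (\<lambda>t. (s + t) mod n) {..<n}"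
    by (auto intro: inj_onI add_mod_cancel_left)
  moreover have "(\<lambda>t. (s + t) mod n) ` {..<n} \<subseteq> {..<n}" using False by auto
  ultimately have "bij_betw (\<lambda>t. (s + t) mod n) {..<n} {..<n}"
    by (simp add: bij_betw_def endo_inj_surj)
  then show ?thesis by (rule sum.reindex_bij_betw)
qed simp

lemma sum_mod_rotate_split:
  fixes n :: nat
  assumes "c \<le> n"
  shows "(\<Sum>t<c. f ((s + t) mod n)) + (\<Sum>t\<in>{c..<n}. f ((s + t) mod n)) = (\<Sum>i<n. f i)"
  using assms sum_mod_rotate[of f s n]
  by (simp add: lessThan_atLeast0 sum.atLeastLessThan_concat)

section \<open>The inflated cycle\<close>

locale inflated_cycle =
  fixes n m :: nat and k :: "nat \<Rightarrow> nat"
    and VG :: "nat \<Rightarrow> 'a set" and EG :: "nat \<Rightarrow> 'a set set" and a b :: "nat \<Rightarrow> 'a"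
    and VM :: "nat \<Rightarrow> 'b set" and EM :: "nat \<Rightarrow> 'b set set" and x y :: "nat \<Rightarrow> 'b"
  assumes two_le_n: "2 \<le> n"
    and G_inflator: "\<And>i. i < n \<Longrightarrow> inflator (VG i) (EG i) (k i) m (a i) (b i)"
    and M_hctv: "\<And>i. i < n \<Longrightarrow> hctv (VM i) (EM i) (x i) (y i)"
    and m_le_card_VM: "\<And>i. i < n \<Longrightarrow> m \<le> card (VM i)"
begin

abbreviation "V \<equiv> cyc_V n VG VM"
abbreviation "E \<equiv> cyc_E n EG EM a b x y"

definition Gcopy :: "nat \<Rightarrow> (nat \<times> 'a + nat \<times> 'b) set" where
  "Gcopy i = (\<lambda>w. Inl (i, w)) ` VG i"

definition Mcopy :: "nat \<Rightarrow> (nat \<times> 'a + nat \<times> 'b) set" where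
  "Mcopy i = (\<lambda>w. Inr (i, w)) ` VM i"

definition prev :: "nat \<Rightarrow> nat" where
  "prev i = (i + n - 1) mod n"

lemma Inl_in_V [simp]: "Inl (i, w) \<in> V \<longleftrightarrow> i < n \<and> w \<in> VG i"
  by (auto simp: cyc_V_def)

lemma Inr_in_V [simp]: "Inr (i, w) \<in> V \<longleftrightarrow> i < n \<and> w \<in> VM i"
  by (auto simp: cyc_V_def)

lemma Inl_in_Gcopy [simp]: "Inl (j, w) \<in> Gcopy i \<longleftrightarrow> j = i \<and> w \<in> VG i"
  by (auto simp: Gcopy_def)

lemma Inr_in_Mcopy [simp]: "Inr (j, w) \<in> Mcopy i \<longleftrightarrow> j = i \<and> w \<in> VM i"
  by (auto simp: Mcopy_def)

lemma V_eq: "V = (\<Union>i<n. Gcopy i) \<union> (\<Union>i<n. Mcopy i)"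
  by (auto simp: cyc_V_def Gcopy_def Mcopy_def)

lemma finite_Gcopy: "i < n \<Longrightarrow> finite (Gcopy i)"
  using G_inflator by (auto simp: Gcopy_def inflator_def graph_def)

lemma finite_Mcopy: "i < n \<Longrightarrow> finite (Mcopy i)"
  using M_hctv by (auto simp: Mcopy_def hctv_def graph_def)

lemma card_Gcopy: "i < n \<Longrightarrow> card (Gcopy i) = k i"
  using G_inflator by (auto simp: Gcopy_def inflator_def card_image inj_on_def)

lemma m_le_k: "i < n \<Longrightarrow> m \<le> k i"
  using G_inflator[of i] unfolding inflator_def by auto

lemma card_Mcopy: "card (Mcopy i) = card (VM i)"
  by (auto simp: Mcopy_def card_image inj_on_def)

lemma Gcopy_disjoint: "i \<noteq> j \<Longrightarrow> Gcopy i \<inter> Gcopy j = {}"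
  by (auto simp: Gcopy_def)

lemma Mcopy_disjoint: "i \<noteq> j \<Longrightarrow> Mcopy i \<inter> Mcopy j = {}"
  by (auto simp: Mcopy_def)

lemma copies_mod_disjoint:
  assumes "t < n" "t' < n" "t \<noteq> t'"
  shows "(Gcopy ((s + t) mod n) \<union> Mcopy ((s + t) mod n)) \<inter>
    (Gcopy ((s + t') mod n) \<union> Mcopy ((s + t') mod n)) = {}"
  using assms add_mod_cancel_left[of s t n t'] by (auto simp: Gcopy_def Mcopy_def)

lemma finite_V: "finite V"
  unfolding V_eq using finite_Gcopy finite_Mcopy by auto

lemma card_eq_sum_copies:
  assumes "S \<subseteq> V"
  shows "card S = (\<Sum>i<n. card (S \<inter> Gcopy i)) + (\<Sum>i<n. card (S \<inter> Mcopy i))"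
proof -
  have "card S = card (S \<inter> (\<Union>i<n. Gcopy i)) + card (S - (\<Union>i<n. Gcopy i))"
    using assms finite_V by (intro card_Int_Diff) (rule finite_subset)
  also have "S \<inter> (\<Union>i<n. Gcopy i) = (\<Union>i<n. S \<inter> Gcopy i)" by blast
  also have "S - (\<Union>i<n. Gcopy i) = (\<Union>i<n. S \<inter> Mcopy i)"
    using assms unfolding V_eq by (auto simp: Gcopy_def Mcopy_def)
  also have "card (\<Union>i<n. S \<inter> Gcopy i) = (\<Sum>i<n. card (S \<inter> Gcopy i))"
    using finite_Gcopy Gcopy_disjoint by (intro card_UN_disjoint) auto
  also have "card (\<Union>i<n. S \<inter> Mcopy i) = (\<Sum>i<n. card (S \<inter> Mcopy i))"
    using finite_Mcopy Mcopy_disjoint by (intro card_UN_disjoint) auto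
  finally show ?thesis .
qed

lemma card_V: "card V = (\<Sum>i<n. k i + card (VM i))"
proof -
  have "V \<inter> Gcopy i = Gcopy i" "V \<inter> Mcopy i = Mcopy i" if "i < n" for i
    using that V_eq by auto
  then show ?thesis
    using card_eq_sum_copies[of V] card_Gcopy card_Mcopy by (simp add: sum.distrib)
qed

lemma Suc_prev [simp]: "i < n \<Longrightarrow> Suc (prev i) mod n = i"
  by (cases i) (auto simp: prev_def)

lemma prev_Suc [simp]: "j < n \<Longrightarrow> prev (Suc j mod n) = j"
  by (cases "Suc j = n") (auto simp: prev_def)

lemma Suc_Suc_mod_add:
  assumes "i < n"
  shows "(Suc (Suc i mod n) + (n - 2)) mod n = i"
proof (cases "Suc i = n")
  case False
  moreover have "Suc (Suc i) + (n - 2) = i + n" using two_le_n by auto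
  ultimately show ?thesis using assms by simp
qed (use two_le_n in auto)

lemma edge_Inl_Inl_iff:
  "{Inl (i, u), Inl (j, w)} \<in> E \<longleftrightarrow> i = j \<and> i < n \<and> {u, w} \<in> EG i"
  unfolding cyc_E_def by (auto simp: doubleton_eq_iff insert_commute)

lemma edge_Inr_Inr_iff:
  "{Inr (i, u), Inr (j, w)} \<in> E \<longleftrightarrow> i = j \<and> i < n \<and> {u, w} \<in> EM i"
  unfolding cyc_E_def by (auto simp: doubleton_eq_iff insert_commute)

lemma edge_Inl_Inr_iff:
  "{Inl (i, u), Inr (j, w)} \<in> E \<longleftrightarrow>
    i < n \<and> j < n \<and> (i = j \<and> u = b i \<and> w = x j \<or> i = Suc j mod n \<and> u = a i \<and> w = y j)"
  unfolding cyc_E_def by (auto simp: doubleton_eq_iff)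

lemma edge_b_x: "i < n \<Longrightarrow> {Inl (i, b i), Inr (i, x i)} \<in> E"
  unfolding cyc_E_def by blast

lemma edge_y_a: "i < n \<Longrightarrow> {Inr (i, y i), Inl (Suc i mod n, a (Suc i mod n))} \<in> E"
  unfolding cyc_E_def by blast

lemma edge_leaving_Gcopy:
  assumes "{w, z} \<in> E" "w \<in> Gcopy i" "z \<notin> Gcopy i" "i < n"
  shows "w = Inl (i, a i) \<and> z = Inr (prev i, y (prev i)) \<or> w = Inl (i, b i) \<and> z = Inr (i, x i)"
proof -
  obtain u where w: "w = Inl (i, u)" "u \<in> VG i" using assms(2) by (auto simp: Gcopy_def)
  show ?thesis
  proof (cases z)
    case (Inl z')
    then obtain j v where "z = Inl (j, v)" by (cases z') auto
    then show ?thesis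
      using assms G_inflator[OF assms(4)] w by (auto simp: edge_Inl_Inl_iff inflator_def graph_def)
  next
    case (Inr z')
    then obtain j v where "z = Inr (j, v)" by (cases z') auto
    then show ?thesis using assms(1,4) w by (auto simp: edge_Inl_Inr_iff)
  qed
qed

lemma edge_leaving_Mcopy:
  assumes "{w, z} \<in> E" "w \<in> Mcopy i" "z \<notin> Mcopy i" "i < n"
  shows "w = Inr (i, x i) \<and> z = Inl (i, b i) \<or>
    w = Inr (i, y i) \<and> z = Inl (Suc i mod n, a (Suc i mod n))"
proof -
  obtain u where w: "w = Inr (i, u)" "u \<in> VM i" using assms(2) by (auto simp: Mcopy_def)
  show ?thesis
  proof (cases z)
    case (Inl z')
    then obtain j v where "z = Inl (j, v)" by (cases z') auto
    then show ?thesis using assms(1) w by (auto simp: edge_Inl_Inr_iff insert_commute)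
  next
    case (Inr z')
    then obtain j v where "z = Inr (j, v)" by (cases z') auto
    then show ?thesis
      using assms M_hctv[OF assms(4)] w by (auto simp: edge_Inr_Inr_iff hctv_def graph_def)
  qed
qed

lemma card_crossings_Gcopy_le:
  assumes "is_path V E p" "i < n"
  shows "card (crossings (Gcopy i) p) \<le> 2"
proof -
  let ?B = "{{Inl (i, a i), Inr (prev i, y (prev i))}, {Inl (i, b i), Inr (i, x i)}}"
  have "card (crossings (Gcopy i) p) \<le> card ?B"
    using assms(1) by (rule card_crossings_le) (use edge_leaving_Gcopy assms(2) in auto)
  also have "\<dots> \<le> 2" by (simp add: card_insert_if)
  finally show ?thesis .
qed

lemma is_path_unlift_Gcopy:
  assumes "is_path V E q" "set q \<subseteq> Gcopy i"
  shows "is_path (VG i) (EG i) (map (snd \<circ> projl) q)"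
  using assms(1)
proof (rule is_path_map)
  have "inj_on (snd \<circ> projl) (Gcopy i)" by (auto simp: Gcopy_def inj_on_def)
  then show "inj_on (snd \<circ> projl) (set q)" using assms(2) by (rule inj_on_subset)
  show "(snd \<circ> projl) ` set q \<subseteq> VG i" using assms(2) by (auto simp: Gcopy_def)
  show "{(snd \<circ> projl) u, (snd \<circ> projl) v} \<in> EG i" if "u \<in> set q" "v \<in> set q" "{u, v} \<in> E" for u v
  proof -
    have "u \<in> Gcopy i" "v \<in> Gcopy i" using that(1,2) assms(2) by auto
    then obtain u' v' where "u = Inl (i, u')" "v = Inl (i, v')" by (auto simp: Gcopy_def)
    then show ?thesis using that(3) by (simp add: edge_Inl_Inl_iff)
  qed
qed

text \<open>The part of the path inside \<open>G\<^sub>i\<close> runs between \<open>a\<^sub>i\<close> and \<open>b\<^sub>i\<close>, the only vertices of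
  \<open>G\<^sub>i\<close> with neighbours outside it.\<close>

lemma card_Gcopy_passed:
  assumes p: "is_path V E p" and i: "i < n"
    and "card (crossings (Gcopy i) p) = 2" "hd p \<notin> Gcopy i"
  shows "card (set p \<inter> Gcopy i) \<le> k i - m"
proof -
  obtain q u v where q: "is_path V E q" "set q = set p \<inter> Gcopy i"
    and uv: "u \<notin> Gcopy i" "v \<notin> Gcopy i" "u \<noteq> v" "{u, hd q} \<in> E" "{last q, v} \<in> E"
    using path_crossing_twice[OF assms(1,3,4)] by blast
  have "hd q \<in> Gcopy i" "last q \<in> Gcopy i"
    using q by (auto simp: is_path_def)
  then have "{hd q, last q} = {Inl (i, a i), Inl (i, b i)}"
    using edge_leaving_Gcopy[OF _ _ uv(1) i, of "hd q"] edge_leaving_Gcopy[OF _ _ uv(2) i, of "last q"]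
      uv(3-5) by (auto simp: insert_commute)
  then have "{hd (map (snd \<circ> projl) q), last (map (snd \<circ> projl) q)} = {a i, b i}"
    using q(1) by (auto simp: is_path_def hd_map last_map doubleton_eq_iff)
  then have "length (map (snd \<circ> projl) q) \<le> k i - m"
    using inflator_length_path_between[OF G_inflator[OF i] is_path_unlift_Gcopy] q by auto
  then show ?thesis using q card_set_path[OF q(1)] by simp
qed

subsection \<open>An upper bound on the order of paths\<close>

text \<open>The inequalities \<open>m (c - e) \<le> 2 (k\<^sub>i - |p \<inter> G\<^sub>i|)\<close> and
  \<open>m (2 - c - e) \<le> 2 (|M\<^sub>i| - |p \<inter> M\<^sub>i|)\<close>, with the subtractions moved to the other side.\<close>

lemma Gcopy_bound:
  assumes p: "is_path V E p" and i: "i < n"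
  shows "m * card (crossings (Gcopy i) p) + 2 * card (set p \<inter> Gcopy i)
    \<le> m * end_count (Gcopy i) p + 2 * k i"
proof (cases "card (crossings (Gcopy i) p) \<le> end_count (Gcopy i) p")
  case True
  have "card (set p \<inter> Gcopy i) \<le> k i"
    using card_mono[OF finite_Gcopy[OF i], of "set p \<inter> Gcopy i"] card_Gcopy[OF i] by auto
  then show ?thesis using True mult_le_mono2 add_le_mono by blast
next
  case False
  have "even (card (crossings (Gcopy i) p) + end_count (Gcopy i) p)"
    using p by (intro even_card_crossings_plus_end_count) (simp add: is_path_def)
  moreover have "c = 2 \<and> e = 0" if "even (c + e)" "\<not> c \<le> e" "c \<le> 2" for c e :: nat
    using that by presburger
  ultimately have "card (crossings (Gcopy i) p) = 2 \<and> end_count (Gcopy i) p = 0"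
    using False card_crossings_Gcopy_le[OF p i] by blast
  then have two: "card (crossings (Gcopy i) p) = 2" and zero: "end_count (Gcopy i) p = 0"
    by auto
  then have "hd p \<notin> Gcopy i" by (simp add: end_count_def)
  then have "card (set p \<inter> Gcopy i) \<le> k i - m" using card_Gcopy_passed[OF p i two] by blast
  then show ?thesis using two zero m_le_k[OF i] by simp
qed

lemma Mcopy_bound:
  assumes p: "is_path V E p" and i: "i < n"
  shows "2 * m + 2 * card (set p \<inter> Mcopy i)
    \<le> m * (card (crossings (Mcopy i) p) + end_count (Mcopy i) p) + 2 * card (VM i)"
proof (cases "2 \<le> card (crossings (Mcopy i) p) + end_count (Mcopy i) p")
  case True
  have "card (set p \<inter> Mcopy i) \<le> card (VM i)"
    using card_mono[OF finite_Mcopy[OF i], of "set p \<inter> Mcopy i"] card_Mcopy by auto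
  moreover have "m * 2 \<le> m * (card (crossings (Mcopy i) p) + end_count (Mcopy i) p)"
    using True by (rule mult_le_mono2)
  ultimately show ?thesis by linarith
next
  case False
  have "even (card (crossings (Mcopy i) p) + end_count (Mcopy i) p)"
    using p by (intro even_card_crossings_plus_end_count) (simp add: is_path_def)
  moreover have "c = 0 \<and> e = 0" if "even (c + e)" "\<not> 2 \<le> c + e" for c e :: nat
    using that by presburger
  ultimately have "card (crossings (Mcopy i) p) = 0 \<and> end_count (Mcopy i) p = 0"
    using False by blast
  then have "crossings (Mcopy i) p = {}" "hd p \<notin> Mcopy i"
    by (auto simp: end_count_def)
  then have "set p \<inter> Mcopy i = {}" by (rule disjoint_if_no_crossings)
  then show ?thesis using m_le_card_VM[OF i] by simp
qed

lemma sum_crossings_Gcopy_eq_Mcopy: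
  assumes p: "is_path V E p"
  shows "(\<Sum>i<n. card (crossings (Gcopy i) p)) = (\<Sum>i<n. card (crossings (Mcopy i) p))"
proof -
  have "(\<Sum>i<n. card (crossings (Gcopy i) p)) = card (crossings (\<Union>i<n. Gcopy i) p)"
    using p Gcopy_disjoint by (intro sum_card_crossings_UN) (auto simp: Gcopy_def edge_Inl_Inl_iff)
  also have "\<dots> = card (crossings (V - (\<Union>i<n. Gcopy i)) p)"
    using p by (simp add: crossings_Diff is_path_def)
  also have "V - (\<Union>i<n. Gcopy i) = (\<Union>i<n. Mcopy i)"
    using V_eq by (auto simp: Gcopy_def Mcopy_def)
  also have "card (crossings (\<Union>i<n. Mcopy i) p) = (\<Sum>i<n. card (crossings (Mcopy i) p))"
    using p Mcopy_disjoint by (intro sum_card_crossings_UN[symmetric]) (auto simp: Mcopy_def edge_Inr_Inr_iff)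
  finally show ?thesis .
qed

lemma sum_end_count_copies:
  assumes p: "is_path V E p"
  shows "(\<Sum>i<n. end_count (Gcopy i) p) + (\<Sum>i<n. end_count (Mcopy i) p) = 2"
proof -
  have "(\<Sum>i<n. end_count (Gcopy i) p) = end_count (\<Union>i<n. Gcopy i) p"
    using Gcopy_disjoint by (intro sum_end_count_UN) auto
  moreover have "(\<Sum>i<n. end_count (Mcopy i) p) = end_count (V - (\<Union>i<n. Gcopy i)) p"
  proof -
    have "V - (\<Union>i<n. Gcopy i) = (\<Union>i<n. Mcopy i)"
      using V_eq by (auto simp: Gcopy_def Mcopy_def)
    then show ?thesis using Mcopy_disjoint by (simp add: sum_end_count_UN)
  qed
  moreover have "p \<noteq> []" "set p \<subseteq> V" using p by (auto simp: is_path_def)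
  ultimately show ?thesis using end_count_Diff[of p V] by simp
qed

theorem length_path_le:
  assumes p: "is_path V E p"
  shows "length p + (n - 1) * m \<le> card V"
proof -
  let ?cG = "\<lambda>i. card (crossings (Gcopy i) p)" and ?cM = "\<lambda>i. card (crossings (Mcopy i) p)"
  let ?eG = "\<lambda>i. end_count (Gcopy i) p" and ?eM = "\<lambda>i. end_count (Mcopy i) p"
  let ?sG = "\<lambda>i. card (set p \<inter> Gcopy i)" and ?sM = "\<lambda>i. card (set p \<inter> Mcopy i)"
  have "(\<Sum>i<n. m * ?cG i + 2 * ?sG i) \<le> (\<Sum>i<n. m * ?eG i + 2 * k i)"
    using Gcopy_bound[OF p] by (intro sum_mono) simp
  then have G: "m * (\<Sum>i<n. ?cG i) + 2 * (\<Sum>i<n. ?sG i) \<le> m * (\<Sum>i<n. ?eG i) + 2 * (\<Sum>i<n. k i)"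
    by (simp add: sum.distrib sum_distrib_left)
  have "(\<Sum>i<n. 2 * m + 2 * ?sM i) \<le> (\<Sum>i<n. m * (?cM i + ?eM i) + 2 * card (VM i))"
    using Mcopy_bound[OF p] by (intro sum_mono) simp
  then have M: "2 * (n * m) + 2 * (\<Sum>i<n. ?sM i)
      \<le> m * (\<Sum>i<n. ?cM i) + m * (\<Sum>i<n. ?eM i) + 2 * (\<Sum>i<n. card (VM i))"
    by (simp add: sum.distrib sum_distrib_left distrib_left mult.commute mult.left_commute)
  have "m * (\<Sum>i<n. ?eG i) + m * (\<Sum>i<n. ?eM i) = 2 * m"
    using sum_end_count_copies[OF p] by (metis distrib_left mult.commute)
  moreover have "length p = (\<Sum>i<n. ?sG i) + (\<Sum>i<n. ?sM i)"
  proof -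
    have "set p \<subseteq> V" using p by (simp add: is_path_def)
    then show ?thesis using card_eq_sum_copies card_set_path[OF p] by simp
  qed
  moreover have "card V = (\<Sum>i<n. k i) + (\<Sum>i<n. card (VM i))"
    by (simp add: card_V sum.distrib)
  moreover have "(n - 1) * m + m = n * m" using two_le_n by (cases n) auto
  moreover have "m * (\<Sum>i<n. ?cG i) = m * (\<Sum>i<n. ?cM i)"
    using sum_crossings_Gcopy_eq_Mcopy[OF p] by simp
  ultimately show ?thesis using G M by linarith
qed

subsection \<open>Long paths\<close>

definition ab_path :: "nat \<Rightarrow> 'a list" where
  "ab_path i = (SOME p. is_path (VG i) (EG i) p \<and> hd p = a i \<and> last p = b i \<and> length p = k i - m)"

definition xy_path :: "nat \<Rightarrow> 'b list" where
  "xy_path i = (SOME q. is_path (VM i) (EM i) q \<and> set q = VM i \<and> hd q = x i \<and> last q = y i)"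

lemma ab_path:
  assumes "i < n"
  shows "is_path (VG i) (EG i) (ab_path i)" "hd (ab_path i) = a i" "last (ab_path i) = b i"
    "length (ab_path i) = k i - m"
proof -
  have "\<exists>p. is_path (VG i) (EG i) p \<and> hd p = a i \<and> last p = b i \<and> length p = k i - m"
    by (rule inflator_ab_path[OF G_inflator[OF assms]]) blast
  then have "is_path (VG i) (EG i) (ab_path i) \<and> hd (ab_path i) = a i \<and> last (ab_path i) = b i
    \<and> length (ab_path i) = k i - m"
    unfolding ab_path_def by (rule someI_ex)
  then show "is_path (VG i) (EG i) (ab_path i)" "hd (ab_path i) = a i" "last (ab_path i) = b i"
    "length (ab_path i) = k i - m"
    by auto
qed

lemma xy_path:
  assumes "i < n"
  shows "is_path (VM i) (EM i) (xy_path i)" "set (xy_path i) = VM i" "hd (xy_path i) = x i"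
    "last (xy_path i) = y i"
proof -
  have "\<exists>q. is_path (VM i) (EM i) q \<and> set q = VM i \<and> hd q = x i \<and> last q = y i"
    by (rule hctv_hamiltonian_path_x_y[OF M_hctv[OF assms]]) blast
  then have "is_path (VM i) (EM i) (xy_path i) \<and> set (xy_path i) = VM i \<and> hd (xy_path i) = x i
    \<and> last (xy_path i) = y i"
    unfolding xy_path_def by (rule someI_ex)
  then show "is_path (VM i) (EM i) (xy_path i)" "set (xy_path i) = VM i" "hd (xy_path i) = x i"
    "last (xy_path i) = y i"
    by auto
qed

abbreviation liftG :: "nat \<Rightarrow> 'a list \<Rightarrow> (nat \<times> 'a + nat \<times> 'b) list" where
  "liftG i \<equiv> map (\<lambda>w. Inl (i, w))"

abbreviation liftM :: "nat \<Rightarrow> 'b list \<Rightarrow> (nat \<times> 'a + nat \<times> 'b) list" where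
  "liftM i \<equiv> map (\<lambda>w. Inr (i, w))"

lemma is_path_liftG:
  assumes "i < n" "is_path (VG i) (EG i) q"
  shows "is_path V E (liftG i q)"
  using assms(2) by (rule is_path_map) (use assms in \<open>auto simp: inj_on_def edge_Inl_Inl_iff is_path_def\<close>)

lemma is_path_liftM:
  assumes "i < n" "is_path (VM i) (EM i) q"
  shows "is_path V E (liftM i q)"
  using assms(2) by (rule is_path_map) (use assms in \<open>auto simp: inj_on_def edge_Inr_Inr_iff is_path_def\<close>)

lemma is_path_liftG_liftM:
  assumes i: "i < n" and P: "is_path (VG i) (EG i) P" "last P = b i"
    and Q: "is_path (VM i) (EM i) Q" "hd Q = x i"
  shows "is_path V E (liftG i P @ liftM i Q)"
proof -
  have "P \<noteq> []" "Q \<noteq> []" using P(1) Q(1) by (auto simp: is_path_def)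
  then show ?thesis
    using is_path_liftG[OF i P(1)] is_path_liftM[OF i Q(1)] edge_b_x[OF i] P(2) Q(2)
    by (intro is_path_append) (auto simp: last_map hd_map)
qed

definition passage :: "nat \<Rightarrow> (nat \<times> 'a + nat \<times> 'b) list" where
  "passage i = liftG i (ab_path i) @ liftM i (xy_path i)"

lemma passage:
  assumes i: "i < n"
  shows "is_path V E (passage i)" "hd (passage i) = Inl (i, a i)" "last (passage i) = Inr (i, y i)"
    "set (passage i) \<subseteq> Gcopy i \<union> Mcopy i" "length (passage i) = k i - m + card (VM i)"
proof -
  note P = ab_path[OF i] and Q = xy_path[OF i]
  have ne: "ab_path i \<noteq> []" "xy_path i \<noteq> []" using P(1) Q(1) by (auto simp: is_path_def)
  show "is_path V E (passage i)"
    unfolding passage_def by (rule is_path_liftG_liftM[OF i P(1,3) Q(1,3)])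
  show "hd (passage i) = Inl (i, a i)" "last (passage i) = Inr (i, y i)"
    using ne P(2) Q(4) by (auto simp: passage_def hd_map last_map)
  show "set (passage i) \<subseteq> Gcopy i \<union> Mcopy i"
    using P(1) Q(2) by (auto simp: passage_def is_path_def Gcopy_def Mcopy_def)
  show "length (passage i) = k i - m + card (VM i)"
    using P(4) Q(2) card_set_path[OF Q(1)] by (simp add: passage_def)
qed

definition passages :: "nat \<Rightarrow> nat \<Rightarrow> (nat \<times> 'a + nat \<times> 'b) list" where
  "passages s c = concat (map (\<lambda>t. passage ((s + t) mod n)) [0..<c])"

lemma set_passages:
  assumes "v \<in> set (passages s c)"
  obtains t where "t < c" "v \<in> Gcopy ((s + t) mod n) \<union> Mcopy ((s + t) mod n)"
proof -
  obtain t where "t < c" "v \<in> set (passage ((s + t) mod n))"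
    using assms by (auto simp: passages_def)
  moreover have "(s + t) mod n < n" using two_le_n by simp
  ultimately show ?thesis using passage(4) that by blast
qed

lemma length_passages:
  "length (passages s c) = (\<Sum>t<c. k ((s + t) mod n) - m + card (VM ((s + t) mod n)))"
  using two_le_n by (induction c) (simp_all add: passages_def passage(5))

lemma path_append_passages:
  assumes j: "j < n" and "c < n" and X: "is_path V E X" "last X = Inr (j, y j)"
    and "\<And>t. t < c \<Longrightarrow> set X \<inter> (Gcopy ((Suc j + t) mod n) \<union> Mcopy ((Suc j + t) mod n)) = {}"
  shows "is_path V E (X @ passages (Suc j) c) \<and>
    last (X @ passages (Suc j) c) = Inr ((j + c) mod n, y ((j + c) mod n))"
  using assms(2,5)
proof (induction c)
  case 0
  then show ?case using X j by (simp add: passages_def)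
next
  case (Suc c)
  let ?l = "(j + c) mod n" and ?i = "(Suc j + c) mod n"
  have IH: "is_path V E (X @ passages (Suc j) c)" "last (X @ passages (Suc j) c) = Inr (?l, y ?l)"
    using Suc by auto
  have i: "?i < n" "Suc ?l mod n = ?i" using j by (auto simp: mod_Suc_eq)
  have "set (passages (Suc j) c) \<inter> set (passage ?i) = {}"
  proof (intro equals0I)
    fix v assume v: "v \<in> set (passages (Suc j) c) \<inter> set (passage ?i)"
    then obtain t where t: "t < c" "v \<in> Gcopy ((Suc j + t) mod n) \<union> Mcopy ((Suc j + t) mod n)"
      using set_passages by blast
    then show False
      using copies_mod_disjoint[of t c "Suc j"] Suc.prems(1) v passage(4)[OF i(1)] by auto
  qed
  moreover have "set X \<inter> set (passage ?i) = {}" using Suc.prems(2)[of c] passage(4)[OF i(1)] by auto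
  moreover have "{last (X @ passages (Suc j) c), hd (passage ?i)} \<in> E"
    using IH(2) passage(2)[OF i(1)] edge_y_a[of ?l, unfolded i(2)] j by simp
  ultimately have "is_path V E ((X @ passages (Suc j) c) @ passage ?i)"
    by (intro is_path_append[OF IH(1) passage(1)[OF i(1)]]) auto
  moreover have "passage ?i \<noteq> []" using passage(1)[OF i(1)] by (simp add: is_path_def)
  ultimately show ?case using passage(3)[OF i(1)] by (simp add: passages_def)
qed

lemma card_V_eq_sum_passages: "card V = (\<Sum>i<n. k i - m + card (VM i)) + n * m"
proof -
  have "(\<Sum>i<n. k i + card (VM i)) = (\<Sum>i<n. (k i - m + card (VM i)) + m)"
  proof (rule sum.cong)
    show "k i + card (VM i) = k i - m + card (VM i) + m" if "i \<in> {..<n}" for i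
      using that m_le_k[of i] by simp
  qed simp
  then show ?thesis by (simp add: card_V sum.distrib)
qed

text \<open>The passages run through the copies \<open>j + 1, \<dots>, j + c\<close>;
  \<open>X\<close> and \<open>Z\<close> cover the remaining copies with \<open>m\<close> vertices more than passages would.\<close>

lemma long_path_around:
  assumes j: "j < n" and c: "c < n"
    and X: "is_path V E X" "last X = Inr (j, y j)"
    and Z: "is_path V E Z" "hd Z = Inl ((Suc j + c) mod n, a ((Suc j + c) mod n))"
    and XZ: "set X \<inter> set Z = {}"
    and home: "\<And>v. v \<in> set X \<union> set Z \<Longrightarrow>
      \<exists>t. c \<le> t \<and> t < n \<and> v \<in> Gcopy ((Suc j + t) mod n) \<union> Mcopy ((Suc j + t) mod n)"
    and len: "length X + length Z =
      (\<Sum>t\<in>{c..<n}. k ((Suc j + t) mod n) - m + card (VM ((Suc j + t) mod n))) + m"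
  shows "\<exists>P. is_path V E P \<and> hd P = hd X \<and> last P = last Z \<and> length P + (n - 1) * m = card V"
proof -
  let ?Y = "X @ passages (Suc j) c"
  have avoid: "v \<notin> Gcopy ((Suc j + t) mod n) \<union> Mcopy ((Suc j + t) mod n)"
    if v: "v \<in> set X \<union> set Z" and t: "t < c" for v t
  proof
    assume v_in: "v \<in> Gcopy ((Suc j + t) mod n) \<union> Mcopy ((Suc j + t) mod n)"
    obtain t' where t': "c \<le> t'" "t' < n" "v \<in> Gcopy ((Suc j + t') mod n) \<union> Mcopy ((Suc j + t') mod n)"
      using home[OF v] by blast
    then show False using copies_mod_disjoint[of t t' "Suc j"] t c v_in by auto
  qed
  have Y: "is_path V E ?Y" "last ?Y = Inr ((j + c) mod n, y ((j + c) mod n))"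
    using path_append_passages[OF j c X] avoid by blast+
  have "set (passages (Suc j) c) \<inter> set Z = {}"
    using avoid by (auto elim: set_passages)
  then have "set ?Y \<inter> set Z = {}" using XZ by auto
  moreover have "{last ?Y, hd Z} \<in> E"
    using Y(2) Z(2) edge_y_a[of "(j + c) mod n"] j by (simp add: mod_Suc_eq)
  ultimately have P: "is_path V E (?Y @ Z)" by (rule is_path_append[OF Y(1) Z(1)])
  have "length (?Y @ Z) = (\<Sum>i<n. k i - m + card (VM i)) + m"
    using len c sum_mod_rotate_split[of c n "\<lambda>i. k i - m + card (VM i)" "Suc j"]
    by (simp add: length_passages)
  moreover have "(n - 1) * m + m = n * m" using two_le_n by (cases n) auto
  ultimately have "length (?Y @ Z) + (n - 1) * m = card V"
    by (simp add: card_V_eq_sum_passages)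
  moreover have "X \<noteq> []" "Z \<noteq> []" using X Z by (auto simp: is_path_def)
  ultimately show ?thesis using P by (intro exI[of _ "?Y @ Z"]) simp
qed

lemma long_path_home:
  assumes i: "i < n"
    and X: "is_path V E X" "set X \<subseteq> Gcopy i \<union> Mcopy i" "last X = Inr (i, y i)"
    and Z: "is_path V E Z" "set Z \<subseteq> Gcopy i" "hd Z = Inl (i, a i)"
    and XZ: "set X \<inter> set Z = {}" and len: "length X + length Z = k i + card (VM i)"
  shows "\<exists>P. is_path V E P \<and> hd P = hd X \<and> last P = last Z \<and> length P + (n - 1) * m = card V"
proof -
  have wrap: "(Suc i + (n - 1)) mod n = i" using i by simp
  have "{n - 1..<n} = {n - 1}" using two_le_n by auto
  show ?thesis
  proof (rule long_path_around[OF i _ X(1,3) Z(1) _ XZ])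
    show "hd Z = Inl ((Suc i + (n - 1)) mod n, a ((Suc i + (n - 1)) mod n))"
      using Z(3) wrap by simp
    show "\<exists>t. n - 1 \<le> t \<and> t < n \<and> v \<in> Gcopy ((Suc i + t) mod n) \<union> Mcopy ((Suc i + t) mod n)"
      if "v \<in> set X \<union> set Z" for v
      using that X(2) Z(2) wrap two_le_n by (intro exI[of _ "n - 1"]) auto
    show "length X + length Z = (\<Sum>t\<in>{n - 1..<n}. k ((Suc i + t) mod n) - m
      + card (VM ((Suc i + t) mod n))) + m"
      using \<open>{n - 1..<n} = {n - 1}\<close> len wrap m_le_k[OF i] by simp
  qed (use two_le_n in simp)
qed

lemma long_path_through_Gcopy:
  assumes i: "i < n" and P: "is_path (VG i) (EG i) P" and Q: "is_path (VG i) (EG i) Q"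
    and PQ: "set P \<inter> set Q = {}" "set P \<union> set Q = VG i" and ends: "last P = b i" "hd Q = a i"
  shows "\<exists>R. is_path V E R \<and> hd R = Inl (i, hd P) \<and> last R = Inl (i, last Q)
    \<and> length R + (n - 1) * m = card V"
proof -
  note H = xy_path[OF i]
  have ne: "P \<noteq> []" "Q \<noteq> []" "xy_path i \<noteq> []" using P Q H(1) by (auto simp: is_path_def)
  have "length P + length Q = k i"
    using card_Un_disjoint[of "set P" "set Q"] PQ card_set_path[OF P] card_set_path[OF Q]
      card_Gcopy[OF i] by (simp add: Gcopy_def card_image inj_on_def)
  then have "\<exists>R. is_path V E R \<and> hd R = hd (liftG i P @ liftM i (xy_path i)) \<and> last R = last (liftG i Q)
      \<and> length R + (n - 1) * m = card V"
    using H ne PQ ends card_set_path[OF H(1)]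
    by (intro long_path_home[OF i is_path_liftG_liftM[OF i P ends(1) H(1,3)] _ _ is_path_liftG[OF i Q]])
      (auto simp: last_map hd_map)
  then show ?thesis using ne by (simp add: hd_map last_map)
qed

lemma long_path_from_Mcopy:
  assumes i: "i < n" and q: "is_path (VM i) (EM i) q" "set q = VM i" "last q = y i"
  shows "\<exists>R. is_path V E R \<and> hd R = Inr (i, hd q) \<and> length R + (n - 1) * m = card V"
proof -
  obtain D where D: "is_path (VG i) (EG i) D" "hd D = a i" "set D = VG i"
    using inflator_hamiltonian_path[OF G_inflator[OF i]] by blast
  have ne: "q \<noteq> []" "D \<noteq> []" using q D by (auto simp: is_path_def)
  have "length D = k i"
    using card_set_path[OF D(1)] D(3) card_Gcopy[OF i] by (simp add: Gcopy_def card_image inj_on_def)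
  then have "\<exists>R. is_path V E R \<and> hd R = hd (liftM i q) \<and> last R = last (liftG i D)
      \<and> length R + (n - 1) * m = card V"
    using q D ne card_set_path[OF q(1)]
    by (intro long_path_home[OF i is_path_liftM[OF i q(1)] _ _ is_path_liftG[OF i D(1)]])
      (auto simp: last_map hd_map)
  then show ?thesis using ne by (auto simp: hd_map)
qed

text \<open>A hamiltonian path of \<open>M\<^sub>i\<close> ending at \<open>x\<^sub>i\<close> forces the long path to leave \<open>M\<^sub>i\<close> through
  \<open>b\<^sub>i\<close> and go around the cycle backwards; it is built reversed, starting with a
  hamiltonian path of \<open>G\<^sub>i\<^sub>+\<^sub>1\<close> that ends at \<open>b\<^sub>i\<^sub>+\<^sub>1\<close>.\<close>

lemma long_path_to_Mcopy:
  assumes i: "i < n" and q: "is_path (VM i) (EM i) q" "set q = VM i" "last q = x i"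
  shows "\<exists>R. is_path V E R \<and> last R = Inr (i, hd q) \<and> length R + (n - 1) * m = card V"
proof -
  let ?j = "Suc i mod n"
  have j: "?j < n" "?j \<noteq> i" using i two_le_n by (auto simp: mod_Suc)
  obtain D where D: "is_path (VG ?j) (EG ?j) D" "hd D = b ?j" "set D = VG ?j"
    using inflator_hamiltonian_path[OF G_inflator[OF j(1)]] by blast
  note H = xy_path[OF j(1)] and A = ab_path[OF i]
  let ?X = "liftG ?j (rev D) @ liftM ?j (xy_path ?j)" and ?Z = "liftG i (ab_path i) @ liftM i (rev q)"
  have ne: "q \<noteq> []" "D \<noteq> []" "xy_path ?j \<noteq> []" "ab_path i \<noteq> []"
    using q D H A by (auto simp: is_path_def)
  have X: "is_path V E ?X"
    using D(1,2) ne by (intro is_path_liftG_liftM[OF j(1) _ _ H(1,3)]) (auto simp: last_rev)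
  have Z: "is_path V E ?Z"
    using q(1,3) ne by (intro is_path_liftG_liftM[OF i A(1,3)]) (auto simp: hd_rev)
  have wrap: "(Suc ?j + (n - 1)) mod n = ?j" "(Suc ?j + (n - 2)) mod n = i"
    using j(1) Suc_Suc_mod_add i by simp_all
  have "{n - 2..<n} = {n - 2, n - 1}" using two_le_n by auto
  then have len: "length ?X + length ?Z = (\<Sum>t\<in>{n - 2..<n}. k ((Suc ?j + t) mod n) - m
      + card (VM ((Suc ?j + t) mod n))) + m"
    using m_le_k[OF j(1)] card_set_path[OF q(1)] card_set_path[OF D(1)] card_set_path[OF H(1)]
      q(2) D(3) H(2) A(4) wrap j(2) two_le_n card_Gcopy[OF j(1)]
    by (simp add: Gcopy_def card_image inj_on_def)
  have "\<exists>R. is_path V E R \<and> hd R = hd ?X \<and> last R = last ?Z \<and> length R + (n - 1) * m = card V"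
  proof (rule long_path_around[OF j(1) _ X _ Z])
    show "last ?X = Inr (?j, y ?j)" using H(4) ne by (simp add: last_map)
    show "hd ?Z = Inl ((Suc ?j + (n - 2)) mod n, a ((Suc ?j + (n - 2)) mod n))"
      using A(2) ne wrap by (simp add: hd_map)
    show "set ?X \<inter> set ?Z = {}" using j(2) by auto
    show "\<exists>t. n - 2 \<le> t \<and> t < n \<and> v \<in> Gcopy ((Suc ?j + t) mod n) \<union> Mcopy ((Suc ?j + t) mod n)"
      if "v \<in> set ?X \<union> set ?Z" for v
    proof (cases "v \<in> set ?X")
      case True
      then show ?thesis using D(3) H(2) wrap(1) two_le_n by (intro exI[of _ "n - 1"]) auto
    next
      case False
      then have "v \<in> set ?Z" using that by blast
      then show ?thesis using A(1) q(2) wrap(2) two_le_n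
        by (intro exI[of _ "n - 2"]) (auto simp: is_path_def)
    qed
  qed (use len two_le_n in auto)
  then show ?thesis using ne by (auto simp: last_map last_rev)
qed

lemma long_path_at_Gcopy:
  assumes i: "i < n" and w: "w \<in> VG i"
  shows "\<exists>R. is_path V E R \<and> Inl (i, w) \<in> {hd R, last R} \<and> length R + (n - 1) * m = card V"
proof -
  obtain P Q where PQ: "is_path (VG i) (EG i) P" "is_path (VG i) (EG i) Q" "set P \<inter> set Q = {}"
    "set P \<union> set Q = VG i" "hd P = w" and ends: "last P = a i \<and> hd Q = b i \<or> last P = b i \<and> hd Q = a i"
    using inflator_split[OF G_inflator[OF i] w] by blast
  have ne: "P \<noteq> []" using PQ(1) by (simp add: is_path_def)
  from ends show ?thesis
  proof
    assume "last P = b i \<and> hd Q = a i"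
    then show ?thesis using long_path_through_Gcopy[OF i PQ(1-4)] PQ(5) by auto
  next
    assume "last P = a i \<and> hd Q = b i"
    then have "last (rev Q) = b i" "hd (rev P) = a i" by (simp_all add: last_rev hd_rev)
    moreover have "set (rev Q) \<inter> set (rev P) = {}" "set (rev Q) \<union> set (rev P) = VG i"
      using PQ(3,4) by auto
    ultimately obtain R where "is_path V E R" "last R = Inl (i, last (rev P))"
      "length R + (n - 1) * m = card V"
      using long_path_through_Gcopy[of i "rev Q" "rev P"] PQ(1,2) i by auto
    then show ?thesis using PQ(5) ne by (auto simp: last_rev)
  qed
qed

lemma long_path_at_Mcopy:
  assumes i: "i < n" and w: "w \<in> VM i"
  shows "\<exists>R. is_path V E R \<and> Inr (i, w) \<in> {hd R, last R} \<and> length R + (n - 1) * m = card V"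
proof -
  obtain q where q: "is_path (VM i) (EM i) q" "set q = VM i" "hd q = w" "last q = x i \<or> last q = y i"
    using hctv_hamiltonian_path[OF M_hctv[OF i] w] by blast
  from q(4) show ?thesis
  proof
    assume "last q = x i"
    then obtain R where "is_path V E R" "last R = Inr (i, hd q)" "length R + (n - 1) * m = card V"
      using long_path_to_Mcopy[OF i q(1,2)] by blast
    then show ?thesis using q(3) by auto
  next
    assume "last q = y i"
    then obtain R where "is_path V E R" "hd R = Inr (i, hd q)" "length R + (n - 1) * m = card V"
      using long_path_from_Mcopy[OF i q(1,2)] by blast
    then show ?thesis using q(3) by auto
  qed
qed

lemma long_path_from:
  assumes "v \<in> V"
  obtains P where "is_path V E P" "hd P = v" "length P + (n - 1) * m = card V"
proof -
  from assms consider i w where "i < n" "w \<in> VG i" "v = Inl (i, w)"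
    | i w where "i < n" "w \<in> VM i" "v = Inr (i, w)"
    by (auto simp: cyc_V_def)
  then have "\<exists>R. is_path V E R \<and> v \<in> {hd R, last R} \<and> length R + (n - 1) * m = card V"
  proof cases
    case 1
    then show ?thesis using long_path_at_Gcopy by simp
  next
    case 2
    then show ?thesis using long_path_at_Mcopy by simp
  qed
  then obtain R where R: "is_path V E R" "v \<in> {hd R, last R}" "length R + (n - 1) * m = card V"
    by blast
  show ?thesis
  proof (cases "hd R = v")
    case True
    then show ?thesis by (rule that[OF R(1) _ R(3)])
  next
    case False
    then have "hd (rev R) = v" using R(2) by (simp add: hd_rev)
    then show ?thesis using that[of "rev R"] R(1,3) by simp
  qed
qed

theorem tau_eq:
  assumes "v \<in> V"
  shows "tau V E v = card V - (n - 1) * m"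
proof -
  obtain P where P: "is_path V E P" "hd P = v" "length P + (n - 1) * m = card V"
    using long_path_from[OF assms] .
  show ?thesis
  proof (rule tau_eqI[OF _ P(1,2)])
    show "length p \<le> card V - (n - 1) * m" if "is_path V E p" for p
      using length_path_le[OF that] by simp
  qed (use P(3) in simp)
qed

theorem detour_graph_V: "detour_graph V E"
  unfolding detour_graph_def by (simp add: tau_eq)

theorem not_traceable_V:
  assumes "0 < m"
  shows "\<not> traceable V E"
proof
  assume "traceable V E"
  then obtain p where "is_path V E p" "set p = V" by (auto simp: traceable_def)
  then have "card V + (n - 1) * m \<le> card V" using length_path_le card_set_path by metis
  then show False using assms two_le_n by simp
qed

lemma rtranclp_adjacent_a0_a:
  "i < n \<Longrightarrow> (adjacent V E)\<^sup>*\<^sup>* (Inl (0, a 0)) (Inl (i, a i))"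
proof (induction i)
  case (Suc i)
  then have i: "i < n" by simp
  have "passage i \<noteq> []" using passage(1)[OF i] by (simp add: is_path_def)
  then have "Inr (i, y i) \<in> set (passage i)" using passage(3)[OF i] last_in_set by metis
  then have "(adjacent V E)\<^sup>*\<^sup>* (Inl (i, a i)) (Inr (i, y i))"
    using rtranclp_adjacent_if_in_path[OF passage(1)[OF i]] passage(2)[OF i] by simp
  moreover have "adjacent V E (Inr (i, y i)) (Inl (Suc i, a (Suc i)))"
    using edge_y_a[OF i] Suc.prems i M_hctv[OF i] G_inflator[OF Suc.prems]
    by (auto simp: adjacent_def hctv_def inflator_def)
  ultimately show ?case using Suc.IH i by (meson rtranclp.rtrancl_into_rtrancl rtranclp_trans)
qed simp

theorem connected_graph_V: "connected_graph V E"
proof (rule connected_graphI)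
  fix v assume "v \<in> V"
  then consider i w where "i < n" "w \<in> VG i" "v = Inl (i, w)" | i w where "i < n" "w \<in> VM i" "v = Inr (i, w)"
    by (auto simp: cyc_V_def)
  then show "(adjacent V E)\<^sup>*\<^sup>* (Inl (0, a 0)) v"
  proof cases
    case 1
    then obtain D where D: "is_path (VG i) (EG i) D" "hd D = a i" "set D = VG i"
      using inflator_hamiltonian_path[OF G_inflator] by blast
    then have "(adjacent V E)\<^sup>*\<^sup>* (Inl (i, a i)) v"
      using rtranclp_adjacent_if_in_path[OF is_path_liftG[OF \<open>i < n\<close> D(1)], of v] 1
      by (auto simp: is_path_def hd_map)
    then show ?thesis using rtranclp_adjacent_a0_a 1 by (meson rtranclp_trans)
  next
    case 2
    then have "(adjacent V E)\<^sup>*\<^sup>* (Inl (i, a i)) v"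
      using rtranclp_adjacent_if_in_path[OF passage(1), of i v] passage(2) xy_path(2)[of i]
      by (auto simp: passage_def)
    then show ?thesis using rtranclp_adjacent_a0_a 2 by (meson rtranclp_trans)
  qed
qed

end

theorem theorem2p24:
  fixes n m :: nat and k :: "nat \<Rightarrow> nat"
    and VG :: "nat \<Rightarrow> 'a set" and EG :: "nat \<Rightarrow> 'a set set" and a b :: "nat \<Rightarrow> 'a"
    and VM :: "nat \<Rightarrow> 'b set" and EM :: "nat \<Rightarrow> 'b set set" and x y :: "nat \<Rightarrow> 'b"
  assumes "n \<ge> 2" and "m > 0"
    and "\<And>i. i < n \<Longrightarrow> k i > 0"
    and "\<And>i. i < n \<Longrightarrow> m + 2 \<le> k i"
    and "\<And>i. i < n \<Longrightarrow> inflator (VG i) (EG i) (k i) m (a i) (b i)"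
    and "\<And>i. i < n \<Longrightarrow> hctv (VM i) (EM i) (x i) (y i)"
    and "\<And>i. i < n \<Longrightarrow> card (VM i) \<ge> m"
  shows "connected_graph (cyc_V n VG VM) (cyc_E n EG EM a b x y)
       \<and> \<not> traceable (cyc_V n VG VM) (cyc_E n EG EM a b x y)
       \<and> detour_graph (cyc_V n VG VM) (cyc_E n EG EM a b x y)"
proof -
  \<comment> \<open>\<open>0 < k i\<close> and \<open>m + 2 \<le> k i\<close> are implied by the inflator property and not used.\<close>
  interpret inflated_cycle n m k VG EG a b VM EM x y
    using assms by unfold_locales auto
  show ?thesis using connected_graph_V not_traceable_V[OF \<open>m > 0\<close>] detour_graph_V by blast
qed

end
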